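(* Let $S$ be a species tree, let $(T,\sigma)$ be a gene tree that is binary (every inner vertex of $T$ other than the planted root $0_T$ has exactly two children), and let $\mu:V(T)\to V(S)\cup E(S)$ be a reconciliation map without horizontal gene transfer satisfying axioms (R0), (R1), (R2), (R3.i), (R3.ii) (but not necessarily (R4)). Let $x,y\in L(T)$ be two genes with $\sigma(x)\neq\sigma(y)$. If $\operatorname{lca}_S(\sigma(x),\sigma(y))\prec_S \mu(\operatorname{lca}_T(x,y))$, then $\operatorname{lca}_T(x,y)$ is a duplication event, i.e., $\mu(\operatorname{lca}_T(x,y))\in E(S)$.
   Context: A planted phylogenetic tree $T$ has a distinguished leaf $0_T$ (the planted root) whose unique neighbour $\rho_T$ is the root; every other non-leaf vertex has at least two children. $L(T)$ denotes the leaves other than $0_T$. For vertices, $a\preceq_T b$ means $b$ lies on the path from $a$ to $0_T$; $\operatorname{lca}_T(A)$ is the $\preceq_T$-minimal vertex that is $\succeq_T$ every element of $A$; $T(v)$ is the subtree rooted at $v$ and $\mathsf{child}(v)$ the set of children of $v$. A species tree $S$ is a planted phylogenetic tree with planted root $0_S$, root $\rho_S$ and leaf set $\mathscr{S}$ (the species); $V^0(S)$ denotes the inner vertices of $S$ (vertices that are neither leaves nor $0_S$). The order $\preceq_S$ is extended to $V(S)\cup E(S)$ by regarding each edge $e=pq$ ($q$ a child of $p$) as lying strictly between $q$ and $p$: $q\prec_S e\prec_S p$, a vertex $w$ satisfies $w\prec_S e$ iff $w\preceq_S q$ and $e\prec_S w$ iff $p\preceq_S w$, and for edges $e=pq$,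 $e'=p'q'$, $e\prec_S e'$ iff $p\preceq_S q'$; $\operatorname{lca}_S$ of elements of $V(S)\cup E(S)$ is the $\preceq_S$-minimal vertex above all of them. A gene tree $(T,\sigma)$ is a planted phylogenetic tree $T$ with a map $\sigma:L(T)\to\mathscr{S}$ assigning to each gene its species. A reconciliation map without horizontal gene transfer is a map $\mu:V(T)\to V(S)\cup E(S)$ satisfying: (R0) $\mu(v)=0_S$ iff $v=0_T$; (R1) $\mu(v)=\sigma(v)$ for $v\in L(T)$; (R2) $v\prec_T w$ implies $\mu(v)\preceq_S\mu(w)$; and for every $v\in V(T)$ with $\mu(v)\in V^0(S)$: (R3.i) $\mu(v)=\operatorname{lca}_S(\mu(v'),\mu(v''))$ for at least two distinct children $v',v''$ of $v$, and (R3.ii) $\mu(v')$ and $\mu(v'')$ are $\preceq_S$-incomparable for any two distinct children $v',v''$ of $v$. A vertex $v$ of $T$ is a speciation if $\mu(v)\in V^0(S)$ and a duplication if $\mu(v)\in E(S)$. *)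

theory Defs
  imports Main
begin

definition children :: "('v \<times> 'v) set \<Rightarrow> 'v \<Rightarrow> 'v set" where
  "children E v = {q. (v, q) \<in> E}"

definition tle :: "('v \<times> 'v) set \<Rightarrow> 'v \<Rightarrow> 'v \<Rightarrow> bool" where
  "tle E a b \<longleftrightarrow> (b, a) \<in> E\<^sup>*"

definition tlt :: "('v \<times> 'v) set \<Rightarrow> 'v \<Rightarrow> 'v \<Rightarrow> bool" where
  "tlt E a b \<longleftrightarrow> tle E a b \<and> a \<noteq> b"

definition planted_phylo_tree :: "'v set \<Rightarrow> ('v \<times> 'v) set \<Rightarrow> 'v \<Rightarrow> bool" where
  "planted_phylo_tree V E r0 \<longleftrightarrow>
     finite V \<and> r0 \<in> V \<and> E \<subseteq> V \<times> V \<and>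
     (\<forall>v. (v, r0) \<notin> E) \<and>
     (\<forall>v\<in>V. v \<noteq> r0 \<longrightarrow> (\<exists>!p. (p, v) \<in> E)) \<and>
     (\<forall>v\<in>V. (r0, v) \<in> E\<^sup>*) \<and>
     card (children E r0) = 1 \<and>
     (\<forall>v\<in>V. v \<noteq> r0 \<and> children E v \<noteq> {} \<longrightarrow> card (children E v) \<ge> 2)"

definition leaves :: "'v set \<Rightarrow> ('v \<times> 'v) set \<Rightarrow> 'v \<Rightarrow> 'v set" where
  "leaves V E r0 = {v \<in> V. v \<noteq> r0 \<and> children E v = {}}"

definition inner :: "'v set \<Rightarrow> ('v \<times> 'v) set \<Rightarrow> 'v \<Rightarrow> 'v set" where
  "inner V E r0 = {v \<in> V. v \<noteq> r0 \<and> children E v \<noteq> {}}"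

definition binary_tree :: "'v set \<Rightarrow> ('v \<times> 'v) set \<Rightarrow> 'v \<Rightarrow> bool" where
  "binary_tree V E r0 \<longleftrightarrow> (\<forall>v \<in> inner V E r0. card (children E v) = 2)"

definition tree_lca :: "'v set \<Rightarrow> ('v \<times> 'v) set \<Rightarrow> 'v set \<Rightarrow> 'v" where
  "tree_lca V E A = (THE w. w \<in> V \<and> (\<forall>a\<in>A. tle E a w) \<and>
       (\<forall>w'\<in>V. (\<forall>a\<in>A. tle E a w') \<longrightarrow> tle E w w'))"

text \<open>Elements of V(S) \<union> E(S): a vertex, or the edge p q (q child of p).\<close>
datatype 'b selem = SV 'b | SE 'b 'b

fun slt :: "('b \<times> 'b) set \<Rightarrow> 'b selem \<Rightarrow> 'b selem \<Rightarrow> bool" where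
  "slt E (SV a) (SV b) = tlt E a b"
| "slt E (SV w) (SE p q) = tle E w q"
| "slt E (SE p q) (SV w) = tle E p w"
| "slt E (SE p q) (SE p' q') = tle E p q'"

definition sle :: "('b \<times> 'b) set \<Rightarrow> 'b selem \<Rightarrow> 'b selem \<Rightarrow> bool" where
  "sle E x y \<longleftrightarrow> slt E x y \<or> x = y"

definition slca :: "'b set \<Rightarrow> ('b \<times> 'b) set \<Rightarrow> 'b selem set \<Rightarrow> 'b" where
  "slca V E A = (THE w. w \<in> V \<and> (\<forall>a\<in>A. sle E a (SV w)) \<and>
       (\<forall>w'\<in>V. (\<forall>a\<in>A. sle E a (SV w')) \<longrightarrow> tle E w w'))"

definition gene_tree :: "'a set \<Rightarrow> ('a \<times> 'a) set \<Rightarrow> 'a \<Rightarrow> ('a \<Rightarrow> 'b)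
     \<Rightarrow> 'b set \<Rightarrow> ('b \<times> 'b) set \<Rightarrow> 'b \<Rightarrow> bool" where
  "gene_tree VT ET rT \<sigma> VS ES rS \<longleftrightarrow> planted_phylo_tree VT ET rT \<and>
     (\<forall>x \<in> leaves VT ET rT. \<sigma> x \<in> leaves VS ES rS)"

definition reconciliation :: "'a set \<Rightarrow> ('a \<times> 'a) set \<Rightarrow> 'a \<Rightarrow> ('a \<Rightarrow> 'b)
     \<Rightarrow> 'b set \<Rightarrow> ('b \<times> 'b) set \<Rightarrow> 'b \<Rightarrow> ('a \<Rightarrow> 'b selem) \<Rightarrow> bool" where
  "reconciliation VT ET rT \<sigma> VS ES rS \<mu> \<longleftrightarrow>
     (\<forall>v\<in>VT. \<mu> v \<in> SV ` VS \<union> (\<lambda>(p,q). SE p q) ` ES) \<and>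
     (\<forall>v\<in>VT. \<mu> v = SV rS \<longleftrightarrow> v = rT) \<and>
     (\<forall>v\<in>leaves VT ET rT. \<mu> v = SV (\<sigma> v)) \<and>
     (\<forall>v\<in>VT. \<forall>w\<in>VT. tlt ET v w \<longrightarrow> sle ES (\<mu> v) (\<mu> w)) \<and>
     (\<forall>v\<in>VT. \<mu> v \<in> SV ` inner VS ES rS \<longrightarrow>
        (\<exists>v'\<in>children ET v. \<exists>v''\<in>children ET v. v' \<noteq> v'' \<and>
            \<mu> v = SV (slca VS ES {\<mu> v', \<mu> v''})) \<and>
        (\<forall>v'\<in>children ET v. \<forall>v''\<in>children ET v. v' \<noteq> v'' \<longrightarrow>
            \<not> sle ES (\<mu> v') (\<mu> v'') \<and> \<not> sle ES (\<mu> v'') (\<mu> v')))"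

end

theory Submission
  imports Defs
begin

(* Suppose v = lca_T(x, y) were a speciation, mu(v) = w with s = lca_S(sigma x, sigma y) strictly
   below w. As T is binary, v has exactly two children c above x and c' above y, so
   w = lca_S(mu c, mu c') with mu c above sigma x and mu c' above sigma y, and by (R3.ii) mu c and
   mu c' are incomparable. Elements of V(S) and E(S) above a common vertex form a chain; so if the
   lower end of mu c were above s, then mu c would lie above sigma y as well and be comparable to
   mu c'. Hence the lower end of mu c is strictly below s, its upper end is at most s, and likewise
   for mu c'. Therefore w is at most s, a contradiction. *)

lemma tle_refl [simp]: "tle E a a"
  by (simp add: tle_def)

lemma tle_trans: "tle E a b \<Longrightarrow> tle E b c \<Longrightarrow> tle E a c"
  unfolding tle_def by (meson rtrancl_trans)

fun upper_vertex :: "'b selem \<Rightarrow> 'b" where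
  "upper_vertex (SV a) = a"
| "upper_vertex (SE p q) = p"

fun lower_vertex :: "'b selem \<Rightarrow> 'b" where
  "lower_vertex (SV a) = a"
| "lower_vertex (SE p q) = q"

definition selems :: "'b set \<Rightarrow> ('b \<times> 'b) set \<Rightarrow> 'b selem set" where
  "selems V E = SV ` V \<union> (\<lambda>(p, q). SE p q) ` E"

lemma selemsE:
  assumes "e \<in> selems V E"
  obtains (vertex) p where "p \<in> V" "e = SV p" | (edge) p q where "(p, q) \<in> E" "e = SE p q"
  using assms unfolding selems_def by auto

lemma sle_SV_iff: "sle E e (SV w) \<longleftrightarrow> tle E (upper_vertex e) w"
  by (cases e) (auto simp: sle_def tlt_def)

lemma SV_sle_iff: "sle E (SV u) e \<longleftrightarrow> tle E u (lower_vertex e)"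
  by (cases e) (auto simp: sle_def tlt_def)

lemma slca_eq_tree_lca: "slca V E A = tree_lca V E (upper_vertex ` A)"
  unfolding slca_def tree_lca_def sle_SV_iff by simp

locale planted_tree =
  fixes V :: "'v set" and E :: "('v \<times> 'v) set" and r0 :: 'v
  assumes planted: "planted_phylo_tree V E r0"
begin

lemma finite_vertices: "finite V"
  and root_in_vertices: "r0 \<in> V"
  and edges_subset: "E \<subseteq> V \<times> V"
  and root_no_parent: "(v, r0) \<notin> E"
  and reachable_from_root: "v \<in> V \<Longrightarrow> (r0, v) \<in> E\<^sup>*"
  and card_children_root: "card (children E r0) = 1"
  using planted unfolding planted_phylo_tree_def by auto

lemma parent_unique:
  assumes "(p, v) \<in> E" "(p', v) \<in> E"
  shows "p = p'"
proof -
  have "v \<in> V" "v \<noteq> r0"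
    using assms(1) edges_subset root_no_parent by auto
  then show ?thesis
    using planted assms unfolding planted_phylo_tree_def by blast
qed

lemma acyclic_edges: "acyclic E"
proof -
  have "(v, v) \<notin> E\<^sup>+" if "(r0, v) \<in> E\<^sup>*" for v
    using that
  proof (induction rule: rtrancl_induct)
    case base
    show ?case using root_no_parent by (auto dest: tranclD2)
  next
    case (step u v)
    show ?case
    proof
      assume "(v, v) \<in> E\<^sup>+"
      then obtain z where "(v, z) \<in> E\<^sup>*" "(z, v) \<in> E"
        by (auto dest: tranclD2)
      with step.hyps(2) have "(u, v) \<in> E" "(v, u) \<in> E\<^sup>*"
        using parent_unique by blast+
      then have "(u, u) \<in> E\<^sup>+"
        by (rule rtrancl_into_trancl2)
      with step.IH show False ..
    qed
  qed
  moreover have "v \<in> V" if "(v, v) \<in> E\<^sup>+" for v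
    using that edges_subset by (auto elim: tranclE)
  ultimately show ?thesis
    unfolding acyclic_def using reachable_from_root by blast
qed

lemma tle_antisym: "tle E a b \<Longrightarrow> tle E b a \<Longrightarrow> a = b"
  using acyclic_edges unfolding tle_def acyclic_def
  by (metis rtranclD rtrancl_into_trancl1 trancl_rtrancl_trancl)

lemma ancestors_linear: "tle E a b \<Longrightarrow> tle E a c \<Longrightarrow> tle E b c \<or> tle E c b"
  unfolding tle_def
proof (induction arbitrary: c rule: rtrancl_induct)
  case base
  then show ?case by blast
next
  case (step a' a)
  show ?case
  proof (cases "c = a")
    case True
    then show ?thesis using step.hyps by (meson rtrancl.rtrancl_into_rtrancl)
  next
    case False
    with step.prems obtain a'' where "(c, a'') \<in> E\<^sup>*" "(a'', a) \<in> E"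
      by (meson rtranclE)
    with step.hyps(2) step.IH show ?thesis
      using parent_unique by blast
  qed
qed

lemma parent_le: "(p, q) \<in> E \<Longrightarrow> tle E q w \<Longrightarrow> q \<noteq> w \<Longrightarrow> tle E p w"
  unfolding tle_def by (metis parent_unique rtranclE)

lemma common_ancestor_least_exists:
  assumes "A \<subseteq> V" "A \<noteq> {}"
  shows "\<exists>z\<in>V. (\<forall>a\<in>A. tle E a z) \<and> (\<forall>w\<in>V. (\<forall>a\<in>A. tle E a w) \<longrightarrow> tle E z w)"
proof -
  define Q where "Q = {w \<in> V. \<forall>a\<in>A. tle E a w}"
  have "r0 \<in> Q"
    using assms root_in_vertices reachable_from_root unfolding Q_def tle_def by blast
  moreover have "wf (E\<inverse>)"
    using finite_vertices edges_subset acyclic_edges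
    by (metis acyclic_converse finite_SigmaI finite_acyclic_wf finite_converse finite_subset)
  then have "wf ((E\<inverse>)\<^sup>+)" by (rule wf_trancl)
  ultimately obtain z where "z \<in> Q" and z_min: "\<And>w. (w, z) \<in> (E\<inverse>)\<^sup>+ \<Longrightarrow> w \<notin> Q"
    unfolding wf_eq_minimal by blast
  obtain a where "a \<in> A" using assms(2) by blast
  have "tle E z w" if "w \<in> Q" for w
  proof -
    have "tle E z w \<or> tle E w z"
      using ancestors_linear \<open>z \<in> Q\<close> that \<open>a \<in> A\<close> unfolding Q_def by blast
    moreover have "\<not> (tle E w z \<and> w \<noteq> z)"
      using z_min[of w] that unfolding tle_def by (auto simp: trancl_converse dest: rtranclD)
    ultimately show ?thesis by auto
  qed
  then show ?thesis using \<open>z \<in> Q\<close> unfolding Q_def by blast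
qed

lemma
  assumes "A \<subseteq> V" "A \<noteq> {}"
  shows tree_lca_in_vertices: "tree_lca V E A \<in> V"
    and tree_lca_above: "a \<in> A \<Longrightarrow> tle E a (tree_lca V E A)"
    and tree_lca_least: "w \<in> V \<Longrightarrow> (\<And>a. a \<in> A \<Longrightarrow> tle E a w) \<Longrightarrow> tle E (tree_lca V E A) w"
proof -
  have "\<exists>!z. z \<in> V \<and> (\<forall>a\<in>A. tle E a z) \<and> (\<forall>w\<in>V. (\<forall>a\<in>A. tle E a w) \<longrightarrow> tle E z w)"
    using common_ancestor_least_exists[OF assms] tle_antisym by blast
  from theI'[OF this] show "tree_lca V E A \<in> V" "a \<in> A \<Longrightarrow> tle E a (tree_lca V E A)"
    "w \<in> V \<Longrightarrow> (\<And>a. a \<in> A \<Longrightarrow> tle E a w) \<Longrightarrow> tle E (tree_lca V E A) w"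
    unfolding tree_lca_def by blast+
qed

lemma leaf_minimal: "x \<in> leaves V E r0 \<Longrightarrow> tle E u x \<Longrightarrow> u = x"
  unfolding leaves_def children_def tle_def by (auto elim: converse_rtranclE)

lemma two_children_not_root:
  "c \<in> children E v \<Longrightarrow> c' \<in> children E v \<Longrightarrow> c \<noteq> c' \<Longrightarrow> v \<noteq> r0"
  using card_children_root by (auto simp: card_Suc_eq)

lemma lca_of_leaves_children:
  assumes x: "x \<in> leaves V E r0" and y: "y \<in> leaves V E r0" and "x \<noteq> y"
  obtains c c' where "c \<in> children E (tree_lca V E {x, y})" "c' \<in> children E (tree_lca V E {x, y})"
    "c \<noteq> c'" "tle E x c" "tle E y c'"
proof -
  define v where "v = tree_lca V E {x, y}"
  have xy_V: "{x, y} \<subseteq> V" using x y unfolding leaves_def by auto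
  have "tle E x v" "tle E y v"
    unfolding v_def using tree_lca_above[OF xy_V] by auto
  moreover have "x \<noteq> v" "y \<noteq> v"
    using leaf_minimal[OF x] leaf_minimal[OF y] \<open>x \<noteq> y\<close> calculation by auto
  ultimately obtain c c' where c: "(v, c) \<in> E" "tle E x c" and c': "(v, c') \<in> E" "tle E y c'"
    unfolding tle_def by (metis converse_rtranclE)
  have "c \<noteq> c'"
  proof
    assume "c = c'"
    then have "tle E v c"
      using c c' edges_subset unfolding v_def by (intro tree_lca_least[OF xy_V]) auto
    with c(1) have "(v, v) \<in> E\<^sup>+"
      unfolding tle_def by (rule rtrancl_into_trancl2)
    then show False using acyclic_edges unfolding acyclic_def by blast
  qed
  with c c' show ?thesis
    using that unfolding v_def children_def by blast
qed

lemma upper_vertex_in_vertices: "e \<in> selems V E \<Longrightarrow> upper_vertex e \<in> V"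
  using edges_subset by (auto elim!: selemsE)

lemma upper_le_if_lower_lt:
  "e \<in> selems V E \<Longrightarrow> tlt E (lower_vertex e) w \<Longrightarrow> tle E (upper_vertex e) w"
  by (auto elim!: selemsE simp: tlt_def intro: parent_le)

lemma sle_linear_if_lower_le:
  assumes "e \<in> selems V E" "f \<in> selems V E" "tle E (lower_vertex e) (lower_vertex f)"
  shows "sle E e f \<or> sle E f e"
  using assms
  by (elim selemsE) (auto simp: sle_def tlt_def dest: parent_le parent_unique)

lemma sle_linear_above:
  assumes "e \<in> selems V E" "f \<in> selems V E" "sle E (SV u) e" "sle E (SV u) f"
  shows "sle E e f \<or> sle E f e"
  using assms ancestors_linear sle_linear_if_lower_le unfolding SV_sle_iff by blast

lemma upper_le_if_incomparable:
  assumes e: "e \<in> selems V E" and f: "f \<in> selems V E"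
    and incomparable: "\<not> sle E e f" "\<not> sle E f e"
    and "sle E (SV u) e" "sle E (SV u') f" "tle E u s" "tle E u' s"
  shows "tle E (upper_vertex e) s"
proof -
  have "tle E u (lower_vertex e)"
    using assms(5) by (simp add: SV_sle_iff)
  with \<open>tle E u s\<close> consider "tle E s (lower_vertex e)" | "tlt E (lower_vertex e) s"
    using ancestors_linear unfolding tlt_def by fastforce
  then show ?thesis
  proof cases
    case 1
    with \<open>tle E u' s\<close> have "sle E (SV u') e"
      by (simp add: SV_sle_iff tle_trans)
    with sle_linear_above[OF e f _ \<open>sle E (SV u') f\<close>] incomparable show ?thesis
      by blast
  next
    case 2
    with e show ?thesis by (rule upper_le_if_lower_lt)
  qed
qed

lemma slca_le_if_incomparable:
  assumes "e \<in> selems V E" "f \<in> selems V E" "\<not> sle E e f" "\<not> sle E f e"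
    and "sle E (SV u) e" "sle E (SV u') f" "s \<in> V" "tle E u s" "tle E u' s"
  shows "tle E (slca V E {e, f}) s"
proof -
  have "tle E (upper_vertex e) s" "tle E (upper_vertex f) s"
    using upper_le_if_incomparable assms by metis+
  moreover have "upper_vertex ` {e, f} \<subseteq> V"
    using assms(1,2) upper_vertex_in_vertices by auto
  ultimately show ?thesis
    unfolding slca_eq_tree_lca using \<open>s \<in> V\<close> by (auto intro: tree_lca_least)
qed

lemma children_nonempty_if_above: "tlt E u w \<Longrightarrow> children E w \<noteq> {}"
  unfolding children_def tlt_def tle_def by (auto elim: converse_rtranclE)

end

lemma reconciliation_in_selems:
  "reconciliation VT ET rT \<sigma> VS ES rS \<mu> \<Longrightarrow> v \<in> VT \<Longrightarrow> \<mu> v \<in> selems VS ES"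
  unfolding reconciliation_def selems_def by blast

lemma reconciliation_root_iff:
  "reconciliation VT ET rT \<sigma> VS ES rS \<mu> \<Longrightarrow> v \<in> VT \<Longrightarrow> \<mu> v = SV rS \<longleftrightarrow> v = rT"
  unfolding reconciliation_def by blast

lemma reconciliation_leaf_below:
  assumes rec: "reconciliation VT ET rT \<sigma> VS ES rS \<mu>"
    and x: "x \<in> leaves VT ET rT" and "c \<in> VT" "tle ET x c"
  shows "sle ES (SV (\<sigma> x)) (\<mu> c)"
proof (cases "x = c")
  case True
  then show ?thesis using rec x unfolding reconciliation_def sle_def by auto
next
  case False
  then have "tlt ET x c" using \<open>tle ET x c\<close> by (simp add: tlt_def)
  moreover have "x \<in> VT" using x by (simp add: leaves_def)
  ultimately show ?thesis using rec x \<open>c \<in> VT\<close> unfolding reconciliation_def by metis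
qed

lemma reconciliation_speciationE:
  assumes rec: "reconciliation VT ET rT \<sigma> VS ES rS \<mu>"
    and v: "v \<in> VT" "\<mu> v = SV w" and w: "w \<in> inner VS ES rS"
  obtains v' v'' where "v' \<in> children ET v" "v'' \<in> children ET v" "v' \<noteq> v''"
    "w = slca VS ES {\<mu> v', \<mu> v''}"
    "\<forall>d\<in>children ET v. \<forall>d'\<in>children ET v. d \<noteq> d' \<longrightarrow> \<not> sle ES (\<mu> d) (\<mu> d')"
proof -
  have "\<mu> v \<in> SV ` inner VS ES rS" using v w by simp
  \<comment> \<open>the last conjunct of the definition is (R3)\<close>
  with v rec[unfolded reconciliation_def, THEN conjunct2, THEN conjunct2, THEN conjunct2,
      THEN conjunct2]
  show ?thesis using that by auto
qed

lemma speciation_children_binary: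
  assumes rec: "reconciliation VT ET rT \<sigma> VS ES rS \<mu>" and bin: "binary_tree VT ET rT"
    and v: "v \<in> VT" "\<mu> v = SV w" and w: "w \<in> inner VS ES rS"
    and c: "c \<in> children ET v" "c' \<in> children ET v" "c \<noteq> c'"
  shows "w = slca VS ES {\<mu> c, \<mu> c'} \<and> \<not> sle ES (\<mu> c) (\<mu> c') \<and> \<not> sle ES (\<mu> c') (\<mu> c)"
proof -
  have "v \<noteq> rT"
    using reconciliation_root_iff[OF rec v(1)] v(2) w by (auto simp: inner_def)
  with v c have "card (children ET v) = 2"
    using bin unfolding binary_tree_def inner_def by auto
  then obtain d d' where "children ET v = {d, d'}"
    by (auto simp: card_2_iff)
  with c have children_v: "children ET v = {c, c'}"
    by auto
  obtain v' v'' where "v' \<in> children ET v" "v'' \<in> children ET v" "v' \<noteq> v''"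
    and w_lca: "w = slca VS ES {\<mu> v', \<mu> v''}"
    and incomparable: "\<forall>d\<in>children ET v. \<forall>d'\<in>children ET v. d \<noteq> d' \<longrightarrow> \<not> sle ES (\<mu> d) (\<mu> d')"
    using reconciliation_speciationE[OF rec v w] .
  then have "{\<mu> v', \<mu> v''} = {\<mu> c, \<mu> c'}"
    unfolding children_v by auto
  with w_lca incomparable c show ?thesis
    by auto
qed

lemma speciation_at_lca_of_leaves:
  assumes T: "gene_tree VT ET rT \<sigma> VS ES rS" and bin: "binary_tree VT ET rT"
    and rec: "reconciliation VT ET rT \<sigma> VS ES rS \<mu>"
    and x: "x \<in> leaves VT ET rT" and y: "y \<in> leaves VT ET rT" and "x \<noteq> y"
    and w: "\<mu> (tree_lca VT ET {x, y}) = SV w" "children ES w \<noteq> {}"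
  obtains a b where "a \<in> selems VS ES" "b \<in> selems VS ES" "\<not> sle ES a b" "\<not> sle ES b a"
    "sle ES (SV (\<sigma> x)) a" "sle ES (SV (\<sigma> y)) b" "w = slca VS ES {a, b}"
proof -
  interpret T: planted_tree VT ET rT using T by (simp add: planted_tree_def gene_tree_def)
  define v where "v = tree_lca VT ET {x, y}"
  obtain c c' where c: "c \<in> children ET v" "c' \<in> children ET v" "c \<noteq> c'"
    and "tle ET x c" "tle ET y c'"
    using x y \<open>x \<noteq> y\<close> unfolding v_def by (rule T.lca_of_leaves_children)
  have "v \<in> VT" "c \<in> VT" "c' \<in> VT"
    using x y c T.edges_subset unfolding v_def leaves_def children_def
    by (auto intro!: T.tree_lca_in_vertices)
  have "w \<in> VS"
    using reconciliation_in_selems[OF rec \<open>v \<in> VT\<close>] w(1) unfolding v_def selems_def by auto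
  moreover have "w \<noteq> rS"
    using reconciliation_root_iff[OF rec \<open>v \<in> VT\<close>] w(1) T.two_children_not_root[OF c]
    unfolding v_def by auto
  ultimately have "w \<in> inner VS ES rS"
    using w(2) unfolding inner_def by blast
  then have "w = slca VS ES {\<mu> c, \<mu> c'}" "\<not> sle ES (\<mu> c) (\<mu> c')" "\<not> sle ES (\<mu> c') (\<mu> c)"
    using speciation_children_binary[OF rec bin \<open>v \<in> VT\<close> w(1)[folded v_def] _ c] by blast+
  moreover have "sle ES (SV (\<sigma> x)) (\<mu> c)" "sle ES (SV (\<sigma> y)) (\<mu> c')"
    using reconciliation_leaf_below[OF rec] x y \<open>c \<in> VT\<close> \<open>c' \<in> VT\<close> \<open>tle ET x c\<close> \<open>tle ET y c'\<close>
    by auto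
  ultimately show thesis
    using that reconciliation_in_selems[OF rec] \<open>c \<in> VT\<close> \<open>c' \<in> VT\<close> by blast
qed

theorem lemma2:
  fixes VT :: "'a set" and ET :: "('a \<times> 'a) set" and rT :: 'a
    and VS :: "'b set" and ES :: "('b \<times> 'b) set" and rS :: 'b
    and \<sigma> :: "'a \<Rightarrow> 'b" and \<mu> :: "'a \<Rightarrow> 'b selem"
  assumes S: "planted_phylo_tree VS ES rS"
    and T: "gene_tree VT ET rT \<sigma> VS ES rS"
    and bin: "binary_tree VT ET rT"
    and rec: "reconciliation VT ET rT \<sigma> VS ES rS \<mu>"
    and x: "x \<in> leaves VT ET rT" and y: "y \<in> leaves VT ET rT"
    and sxy: "\<sigma> x \<noteq> \<sigma> y"
    and lt: "slt ES (SV (slca VS ES {SV (\<sigma> x), SV (\<sigma> y)})) (\<mu> (tree_lca VT ET {x, y}))"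
  shows "\<exists>p q. (p, q) \<in> ES \<and> \<mu> (tree_lca VT ET {x, y}) = SE p q"
proof (rule ccontr)
  assume no_duplication: "\<not> ?thesis"
  interpret S: planted_tree VS ES rS by (rule planted_tree.intro) (fact S)
  interpret T: planted_tree VT ET rT using T by (simp add: planted_tree_def gene_tree_def)
  define v where "v = tree_lca VT ET {x, y}"
  define s where "s = tree_lca VS ES {\<sigma> x, \<sigma> y}"
  have "{x, y} \<subseteq> VT" "{\<sigma> x, \<sigma> y} \<subseteq> VS"
    using T x y unfolding gene_tree_def leaves_def by auto
  then have "v \<in> VT" and s: "s \<in> VS" "tle ES (\<sigma> x) s" "tle ES (\<sigma> y) s"
    unfolding v_def s_def
    by (auto intro: T.tree_lca_in_vertices S.tree_lca_in_vertices S.tree_lca_above)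
  from reconciliation_in_selems[OF rec \<open>v \<in> VT\<close>] obtain w where w: "\<mu> v = SV w"
    using no_duplication unfolding v_def by (cases rule: selemsE) auto
  have "tlt ES s w"
    using lt w unfolding v_def[symmetric] s_def slca_eq_tree_lca by simp
  then have "children ES w \<noteq> {}"
    by (rule S.children_nonempty_if_above)
  moreover have "x \<noteq> y"
    using sxy by blast
  ultimately obtain a b where "a \<in> selems VS ES" "b \<in> selems VS ES" "\<not> sle ES a b" "\<not> sle ES b a"
    "sle ES (SV (\<sigma> x)) a" "sle ES (SV (\<sigma> y)) b" "w = slca VS ES {a, b}"
    using speciation_at_lca_of_leaves[OF T bin rec x y] w unfolding v_def by metis
  then have "tle ES w s"
    using S.slca_le_if_incomparable s by metis
  with \<open>tlt ES s w\<close> show False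
    using S.tle_antisym unfolding tlt_def by blast
qed

end
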